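(* Let $D\ge2$ and $2\le m\le D$ be integers. Let $P\in\mathbb{C}[x]$ have the form $P(x)=ax^D+bx^{D-m}+(\text{terms of degree}<D-m)$ with $ab\neq0$ (so the coefficients of $x^{D-1},\dots,x^{D-m+1}$ vanish). Then for every positive integer $n$, the iterate $P^n$ has the form $\alpha x^{D^n}+\beta x^{D^n-m}+(\text{terms of degree}<D^n-m)$ with $\alpha\beta\neq0$.
   Context: $P^n$ denotes the $n$-th compositional iterate of $P$. *)

theory Defs
  imports "HOL-Computational_Algebra.Polynomial" Complex_Main
begin

definition poly_iter :: "'a::comm_semiring_1 poly \<Rightarrow> nat \<Rightarrow> 'a poly" where
  "poly_iter P n = ((\<lambda>q. pcompose P q) ^^ n) [:0, 1:]"

end

theory Submission
  imports Defs
begin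

text \<open>Call \<open>Q = \<alpha> x^E + \<beta> x^(E-m) + R\<close>, with \<open>\<alpha>, \<beta> \<noteq> 0\<close> and \<open>deg R < E - m\<close>, a gap form.
  A product of two such shapes has the same shape, with the two top coefficients multiplying and
  the second ones combining linearly; hence \<open>Q^D = \<alpha>^D x^(DE) + D \<alpha>^(D-1) \<beta> x^(DE-m) + \<dots>\<close>, whose
  second coefficient is nonzero in characteristic 0. If \<open>P = a x^D + S\<close> with \<open>deg S \<le> D - m\<close>, then
  \<open>P \<circ> Q = a Q^D + S \<circ> Q\<close>, and \<open>deg (S \<circ> Q) \<le> (D - m) E < DE - m\<close> because \<open>E \<ge> m \<ge> 2\<close>.
  So composition preserves gap forms, and induction on \<open>n\<close> gives the claim for \<open>P\<^sup>n\<close>.\<close>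

definition coeffs_vanish_from :: "'a::zero poly \<Rightarrow> nat \<Rightarrow> bool" where
  "coeffs_vanish_from R d \<longleftrightarrow> (\<forall>k\<ge>d. coeff R k = 0)"

lemma coeffs_vanish_from_add:
  "coeffs_vanish_from R d \<Longrightarrow> coeffs_vanish_from S d \<Longrightarrow> coeffs_vanish_from (R + S) d"
  by (simp add: coeffs_vanish_from_def)

lemma coeffs_vanish_from_smult: "coeffs_vanish_from R d \<Longrightarrow> coeffs_vanish_from (smult c R) d"
  by (simp add: coeffs_vanish_from_def)

lemma coeffs_vanish_from_mono:
  "coeffs_vanish_from R d \<Longrightarrow> d \<le> d' \<Longrightarrow> coeffs_vanish_from R d'"
  by (simp add: coeffs_vanish_from_def)

lemma coeffs_vanish_from_monom: "k < d \<Longrightarrow> coeffs_vanish_from (monom c k) d"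
  by (simp add: coeffs_vanish_from_def)

lemma coeffs_vanish_from_degree: "degree R < d \<Longrightarrow> coeffs_vanish_from R d"
  by (simp add: coeffs_vanish_from_def coeff_eq_0)

lemma degree_le_if_coeffs_vanish_from: "coeffs_vanish_from R d \<Longrightarrow> degree R \<le> d"
  by (auto simp: coeffs_vanish_from_def intro: degree_le)

lemma coeffs_vanish_from_mult:
  fixes R S :: "'a::comm_semiring_0 poly"
  assumes "coeffs_vanish_from R d" "degree S \<le> e"
  shows "coeffs_vanish_from (R * S) (d + e)"
  unfolding coeffs_vanish_from_def
proof (intro allI impI)
  fix k assume k: "d + e \<le> k"
  have "coeff R i * coeff S (k - i) = 0" for i
    using assms k by (cases "i < d") (auto simp: coeffs_vanish_from_def coeff_eq_0)
  then show "coeff (R * S) k = 0" by (simp add: coeff_mult)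
qed

lemma pcompose_power: "pcompose (p ^ n) q = pcompose p q ^ n"
  for p q :: "'a::comm_semiring_1 poly"
  by (induction n) (simp_all add: pcompose_1 pcompose_mult)

lemma pcompose_monom: "pcompose (monom c n) q = smult c (q ^ n)"
  for q :: "'a::comm_semiring_1 poly"
  by (simp add: monom_altdef pcompose_smult pcompose_power pcompose_pCons)

lemma degree_gap_decomp_le:
  assumes "coeffs_vanish_from R (E - m)"
  shows "degree (monom \<alpha> E + monom \<beta> (E - m) + R) \<le> E"
  using degree_le_if_coeffs_vanish_from[OF assms]
  by (intro degree_add_le order.trans[OF degree_monom_le]) auto

lemma mult_gap_decomp:
  fixes \<alpha> \<beta> \<alpha>' \<beta>' :: "'a::comm_semiring_1"
  assumes R: "coeffs_vanish_from R (E - m)" and R': "coeffs_vanish_from R' (E' - m)"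
    and m: "1 \<le> m" "m \<le> E" "m \<le> E'"
  shows "\<exists>R''. coeffs_vanish_from R'' (E + E' - m) \<and>
    (monom \<alpha> E + monom \<beta> (E - m) + R) * (monom \<alpha>' E' + monom \<beta>' (E' - m) + R') =
    monom (\<alpha> * \<alpha>') (E + E') + monom (\<alpha> * \<beta>' + \<beta> * \<alpha>') (E + E' - m) + R''"
proof -
  define Q' where "Q' = monom \<alpha>' E' + monom \<beta>' (E' - m) + R'"
  define R'' where "R'' = monom \<alpha> E * R' + monom \<beta> (E - m) * monom \<beta>' (E' - m)
    + monom \<beta> (E - m) * R' + R * Q'"
  have "(monom \<alpha> E + monom \<beta> (E - m) + R) * Q' = monom \<alpha> E * monom \<alpha>' E'
    + (monom \<alpha> E * monom \<beta>' (E' - m) + monom \<beta> (E - m) * monom \<alpha>' E') + R''"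
    by (simp add: Q'_def R''_def algebra_simps)
  also have "\<dots> = monom (\<alpha> * \<alpha>') (E + E') + monom (\<alpha> * \<beta>' + \<beta> * \<alpha>') (E + E' - m) + R''"
    using m by (simp add: mult_monom add_monom)
  finally have "(monom \<alpha> E + monom \<beta> (E - m) + R) * Q' = \<dots>" .
  moreover have "coeffs_vanish_from R'' (E + E' - m)"
  proof -
    have "coeffs_vanish_from (monom \<alpha> E * R') (E + E' - m)"
      using coeffs_vanish_from_mult[OF R' degree_monom_le] m
      by (simp add: mult.commute add.commute)
    moreover have "coeffs_vanish_from (monom \<beta> (E - m) * monom \<beta>' (E' - m)) (E + E' - m)"
      using m by (simp add: mult_monom coeffs_vanish_from_monom)
    moreover have "coeffs_vanish_from (monom \<beta> (E - m) * R') (E + E' - m)"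
      using coeffs_vanish_from_mult[OF R' degree_monom_le, of \<beta> "E - m"] m
      by (simp add: mult.commute) (erule coeffs_vanish_from_mono; simp)
    moreover have "coeffs_vanish_from (R * Q') (E + E' - m)"
      using coeffs_vanish_from_mult[OF R degree_gap_decomp_le[OF R']] m
      by (simp add: Q'_def)
    ultimately show ?thesis by (simp add: R''_def coeffs_vanish_from_add)
  qed
  ultimately show ?thesis by (auto simp: Q'_def)
qed

lemma power_gap_decomp:
  fixes \<alpha> \<beta> :: "'a::comm_semiring_1"
  assumes R: "coeffs_vanish_from R (E - m)" and m: "1 \<le> m" "m \<le> E"
  shows "\<exists>R'. coeffs_vanish_from R' (Suc j * E - m) \<and>
    (monom \<alpha> E + monom \<beta> (E - m) + R) ^ Suc j =
    monom (\<alpha> ^ Suc j) (Suc j * E) + monom (of_nat (Suc j) * \<alpha> ^ j * \<beta>) (Suc j * E - m) + R'"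
proof (induction j)
  case 0
  show ?case using R by auto
next
  case (Suc j)
  then obtain R' where R': "coeffs_vanish_from R' (Suc j * E - m)"
    and pow: "(monom \<alpha> E + monom \<beta> (E - m) + R) ^ Suc j =
      monom (\<alpha> ^ Suc j) (Suc j * E) + monom (of_nat (Suc j) * \<alpha> ^ j * \<beta>) (Suc j * E - m) + R'"
    by blast
  have "m \<le> Suc j * E" using m by (simp add: trans_le_add1)
  from mult_gap_decomp[OF R R' m(1,2) this, of \<alpha> \<beta> "\<alpha> ^ Suc j" "of_nat (Suc j) * \<alpha> ^ j * \<beta>"]
  show ?case
    by (simp only: power_Suc[of _ "Suc j"] pow) (simp add: algebra_simps)
qed

definition gap_form :: "'a::zero poly \<Rightarrow> nat \<Rightarrow> nat \<Rightarrow> bool" where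
  "gap_form Q E m \<longleftrightarrow> degree Q = E \<and> coeff Q E \<noteq> 0 \<and> coeff Q (E - m) \<noteq> 0 \<and>
    (\<forall>k. E - m < k \<and> k < E \<longrightarrow> coeff Q k = 0)"

lemma gap_form_iff_decomp:
  fixes Q :: "'a::comm_ring_1 poly"
  assumes "1 \<le> m" "m \<le> E"
  shows "gap_form Q E m \<longleftrightarrow> (\<exists>\<alpha> \<beta> R. \<alpha> \<noteq> 0 \<and> \<beta> \<noteq> 0 \<and> coeffs_vanish_from R (E - m) \<and>
    Q = monom \<alpha> E + monom \<beta> (E - m) + R)"
proof
  assume Q: "gap_form Q E m"
  define R where "R = Q - monom (coeff Q E) E - monom (coeff Q (E - m)) (E - m)"
  have "coeffs_vanish_from R (E - m)"
    unfolding coeffs_vanish_from_def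
  proof (intro allI impI)
    fix k assume "E - m \<le> k"
    then consider "k = E - m" | "E - m < k \<and> k < E" | "k = E" | "E < k" by linarith
    then show "coeff R k = 0"
      using Q assms by cases (auto simp: R_def gap_form_def coeff_eq_0)
  qed
  moreover have "Q = monom (coeff Q E) E + monom (coeff Q (E - m)) (E - m) + R"
    by (simp add: R_def)
  ultimately show "\<exists>\<alpha> \<beta> R. \<alpha> \<noteq> 0 \<and> \<beta> \<noteq> 0 \<and> coeffs_vanish_from R (E - m) \<and>
    Q = monom \<alpha> E + monom \<beta> (E - m) + R"
    using Q by (auto simp: gap_form_def)
next
  assume "\<exists>\<alpha> \<beta> R. \<alpha> \<noteq> 0 \<and> \<beta> \<noteq> 0 \<and> coeffs_vanish_from R (E - m) \<and>
    Q = monom \<alpha> E + monom \<beta> (E - m) + R"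
  then obtain \<alpha> \<beta> R where "\<alpha> \<noteq> 0" "\<beta> \<noteq> 0" and R: "coeffs_vanish_from R (E - m)"
    and Q: "Q = monom \<alpha> E + monom \<beta> (E - m) + R" by blast
  moreover have "coeff R k = 0" if "E - m \<le> k" for k
    using R that by (simp add: coeffs_vanish_from_def)
  moreover have "degree Q \<le> E"
    unfolding Q by (rule degree_gap_decomp_le[OF R])
  ultimately show "gap_form Q E m"
    using assms by (auto simp: gap_form_def le_antisym le_degree)
qed

lemma pcompose_gap_form:
  fixes P Q :: "'a::{idom, ring_char_0} poly"
  assumes P: "gap_form P D m" and Q: "gap_form Q E m"
    and m: "2 \<le> m" "m \<le> D" "m \<le> E"
  shows "gap_form (pcompose P Q) (D * E) m"
proof -
  obtain a b R0 where ab: "a \<noteq> 0" "b \<noteq> 0" and R0: "coeffs_vanish_from R0 (D - m)"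
    and P_eq: "P = monom a D + monom b (D - m) + R0"
    using P m gap_form_iff_decomp[of m D P] by auto
  obtain \<alpha> \<beta> R where \<alpha>\<beta>: "\<alpha> \<noteq> 0" "\<beta> \<noteq> 0" and R: "coeffs_vanish_from R (E - m)"
    and Q_eq: "Q = monom \<alpha> E + monom \<beta> (E - m) + R"
    using Q m gap_form_iff_decomp[of m E Q] by auto
  obtain d where D: "D = Suc d" using m by (cases D) auto
  obtain RD where RD: "coeffs_vanish_from RD (D * E - m)"
    and Q_pow: "Q ^ D = monom (\<alpha> ^ D) (D * E) + monom (of_nat D * \<alpha> ^ d * \<beta>) (D * E - m) + RD"
    using power_gap_decomp[OF R _ m(3), of d \<alpha> \<beta>] m
    unfolding Q_eq[symmetric] D[symmetric] by auto
  define S where "S = monom b (D - m) + R0"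
  have "degree S \<le> D - m"
    unfolding S_def using degree_le_if_coeffs_vanish_from[OF R0]
    by (intro degree_add_le degree_monom_le)
  moreover have "degree Q = E" using Q by (simp add: gap_form_def)
  ultimately have "degree (pcompose S Q) \<le> (D - m) * E"
    using degree_pcompose_le[of S Q] by (metis le_trans mult_le_mono1)
  also have "(D - m) * E < D * E - m"
  proof -
    have "(D - m) * E + m * E = D * E"
      using m(2) by (simp flip: add_mult_distrib)
    moreover have "m * 2 \<le> m * E" using m by simp
    ultimately show ?thesis using m by linarith
  qed
  finally have S_low: "coeffs_vanish_from (pcompose S Q) (D * E - m)"
    by (rule coeffs_vanish_from_degree)
  have "pcompose P Q = smult a (Q ^ D) + pcompose S Q"
    by (simp add: P_eq S_def pcompose_add pcompose_monom)
  also have "\<dots> = monom (a * \<alpha> ^ D) (D * E) + monom (a * (of_nat D * \<alpha> ^ d * \<beta>)) (D * E - m)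
      + (smult a RD + pcompose S Q)"
    by (simp add: Q_pow smult_monom smult_add_right algebra_simps)
  finally have PQ_eq: "pcompose P Q = \<dots>" .
  have "a * \<alpha> ^ D \<noteq> 0" "a * (of_nat D * \<alpha> ^ d * \<beta>) \<noteq> 0"
    using ab \<alpha>\<beta> by (simp_all add: D del: of_nat_Suc)
  moreover have "coeffs_vanish_from (smult a RD + pcompose S Q) (D * E - m)"
    using RD S_low by (intro coeffs_vanish_from_add coeffs_vanish_from_smult)
  ultimately have "\<exists>\<alpha>' \<beta>' R'. \<alpha>' \<noteq> 0 \<and> \<beta>' \<noteq> 0 \<and> coeffs_vanish_from R' (D * E - m) \<and>
    pcompose P Q = monom \<alpha>' (D * E) + monom \<beta>' (D * E - m) + R'"
    using PQ_eq by blast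
  moreover have "m \<le> D * E" using m D by (simp add: trans_le_add1)
  ultimately show ?thesis
    using m gap_form_iff_decomp[of m "D * E" "pcompose P Q"] by simp
qed

lemma poly_iter_Suc: "poly_iter P (Suc n) = pcompose P (poly_iter P n)"
  by (simp add: poly_iter_def)

lemma gap_form_poly_iter:
  fixes P :: "'a::{idom, ring_char_0} poly"
  assumes P: "gap_form P D m" and m: "2 \<le> m" "m \<le> D" and n: "1 \<le> n"
  shows "gap_form (poly_iter P n) (D ^ n) m"
  using n
proof (induction n rule: dec_induct)
  case base
  show ?case using P by (simp add: poly_iter_def)
next
  case (step j)
  have "m \<le> D ^ j"
    using m step.hyps self_le_power[of D j] by simp
  with pcompose_gap_form[OF P step.IH m] show ?case
    by (simp add: poly_iter_Suc)
qed

theorem lemma7p2: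
  fixes P :: "complex poly" and D m :: nat and a b :: complex
  assumes "D \<ge> 2" and "2 \<le> m" and "m \<le> D"
    and "degree P = D" and "coeff P D = a" and "coeff P (D - m) = b"
    and "a * b \<noteq> 0"
    and "\<forall>k. D - m < k \<and> k < D \<longrightarrow> coeff P k = 0"
  shows "\<forall>n::nat. n \<ge> 1 \<longrightarrow>
           degree (poly_iter P n) = D ^ n \<and>
           coeff (poly_iter P n) (D ^ n) * coeff (poly_iter P n) (D ^ n - m) \<noteq> 0 \<and>
           (\<forall>k. D ^ n - m < k \<and> k < D ^ n \<longrightarrow> coeff (poly_iter P n) k = 0)"
proof -
  have "gap_form P D m" using assms(4-8) by (simp add: gap_form_def)
  from gap_form_poly_iter[OF this assms(2,3)] show ?thesis
    by (auto simp: gap_form_def)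
qed

end
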